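(* Let a countable group $G$ act continuously on a Polish space $X$ and let $E$ be an equivalence relation on $X$. If $E\subseteq E^X_G$ and $E$ is $G$-clopen, then $E$ is an $F_\sigma$ subset of $X\times X$ (in particular Borel). If $E$ is a clopen subset of $X\times X$, then $E$ is $G$-clopen.
   Context: $E^X_G$ is the orbit equivalence relation $x\mathrel{E^X_G}y\iff\exists g\in G\,(g\cdot x=y)$. A relation $R\subseteq X\times X$ is $G$-clopen if for every $g\in G$ the set $\{x\in X: (x,g\cdot x)\in R\}$ is clopen in $X$. *)

theory Defs
  imports "HOL-Analysis.Analysis"
begin

text \<open>A continuous action of a (countable, discrete) group 'g, written additively
  (group_add need not be commutative), on a topological space 'a.\<close>
definition continuous_action :: "('g::group_add \<Rightarrow> 'a::topological_space \<Rightarrow> 'a) \<Rightarrow> bool" where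
  "continuous_action act \<longleftrightarrow>
     (\<forall>x. act 0 x = x) \<and> (\<forall>g h x. act (g + h) x = act g (act h x)) \<and>
     (\<forall>g. continuous_on UNIV (act g))"

definition orbit_rel :: "('g \<Rightarrow> 'a \<Rightarrow> 'a) \<Rightarrow> ('a \<times> 'a) set" where
  "orbit_rel act = {(x, y). \<exists>g. act g x = y}"

definition G_clopen :: "('g \<Rightarrow> 'a::topological_space \<Rightarrow> 'a) \<Rightarrow> ('a \<times> 'a) set \<Rightarrow> bool" where
  "G_clopen act R \<longleftrightarrow> (\<forall>g. open {x. (x, act g x) \<in> R} \<and> closed {x. (x, act g x) \<in> R})"

end

theory Submission
  imports Defs
begin

text \<open>A subrelation E of the orbit relation is the union, over the countably many g, of the
  graphs of act g restricted to {x. (x, act g x) \<in> E}; these sets are closed when E is G-clopen,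
  and graphs of continuous maps into a Hausdorff space over closed sets are closed.
  Conversely, {x. (x, act g x) \<in> E} is the preimage of E under the continuous map x \<mapsto> (x, act g x).\<close>

lemma continuous_action_continuous_on:
  assumes "continuous_action act"
  shows "continuous_on UNIV (act g)"
  using assms unfolding continuous_action_def by blast

lemma closed_graph_over_closed:
  fixes f :: "'a::topological_space \<Rightarrow> 'b::t2_space"
  assumes "continuous_on UNIV f" and "closed A"
  shows "closed ((\<lambda>x. (x, f x)) ` A)"
proof -
  have "(\<lambda>x. (x, f x)) ` A = (A \<times> UNIV) \<inter> {p. snd p = f (fst p)}"
    by auto
  moreover have "closed {p. snd p = f (fst p)}"
    by (intro closed_Collect_eq continuous_intros continuous_on_compose2[OF assms(1)]) auto
  ultimately show ?thesis
    using assms(2) by (simp add: closed_Int closed_Times)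
qed

lemma G_clopen_if_clopen:
  assumes "\<And>g. continuous_on UNIV (act g)" and "open E" and "closed E"
  shows "G_clopen act E"
proof -
  have "continuous_on UNIV (\<lambda>x. (x, act g x))" for g
    by (intro continuous_intros assms(1))
  moreover have "{x. (x, act g x) \<in> E} = (\<lambda>x. (x, act g x)) -` E" for g
    by auto
  ultimately show ?thesis
    unfolding G_clopen_def using assms(2,3)
    by (metis closed_vimage open_vimage)
qed

lemma subset_orbit_rel_eq_UN_graphs:
  assumes "E \<subseteq> orbit_rel act"
  shows "E = (\<Union>g. (\<lambda>x. (x, act g x)) ` {x. (x, act g x) \<in> E})"
  using assms unfolding orbit_rel_def by fastforce

lemma fsigma_in_imp_borel:
  assumes "fsigma_in euclidean S"
  shows "S \<in> sets borel"
proof -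
  obtain \<F> where \<F>: "countable \<F>" "\<F> \<subseteq> Collect (closedin euclidean)" "\<Union>\<F> = S"
    using assms unfolding fsigma_in_def union_of_def by blast
  then have "\<F> \<subseteq> sets borel"
    by (auto simp flip: closed_closedin intro: borel_closed)
  with \<F> show ?thesis
    using sets.countable_Union by blast
qed

theorem lemma3p4:
  fixes act :: "'g::{group_add, countable} \<Rightarrow> 'a::polish_space \<Rightarrow> 'a"
    and E :: "('a \<times> 'a) set"
  assumes "continuous_action act"
    and "equiv UNIV E"
  shows "(E \<subseteq> orbit_rel act \<and> G_clopen act E \<longrightarrow> fsigma_in euclidean E \<and> E \<in> sets borel)
     \<and> (open E \<and> closed E \<longrightarrow> G_clopen act E)"
proof (intro conjI impI)
  assume "E \<subseteq> orbit_rel act \<and> G_clopen act E"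
  then have E_eq: "E = (\<Union>g. (\<lambda>x. (x, act g x)) ` {x. (x, act g x) \<in> E})"
    and "closed {x. (x, act g x) \<in> E}" for g
    using subset_orbit_rel_eq_UN_graphs unfolding G_clopen_def by blast+
  then have "closed ((\<lambda>x. (x, act g x)) ` {x. (x, act g x) \<in> E})" for g
    by (intro closed_graph_over_closed continuous_action_continuous_on[OF assms(1)])
  then show "fsigma_in euclidean E"
    by (subst E_eq, intro fsigma_in_Union closed_imp_fsigma_in) auto
  then show "E \<in> sets borel"
    by (rule fsigma_in_imp_borel)
next
  assume "open E \<and> closed E"
  then show "G_clopen act E"
    by (intro G_clopen_if_clopen continuous_action_continuous_on[OF assms(1)]) auto
qed

end
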